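(* Let $(\mathcal{M},\varphi,\xi,\eta,g)$ be an almost paracontact almost paracomplex Riemannian manifold which is para-Einstein-like with constants $(a,b,c)$ and admits a para-Ricci-like soliton with potential $\xi$ and constants $(\lambda,\mu,\nu)$. Then: (i) $a+b+c=-\lambda-\mu-\nu$; (ii) $\nabla_\xi\xi=0$, i.e. $\xi$ is geodesic; (iii) $(\nabla_\xi\varphi)\xi=0$, $\nabla_\xi\eta=0$, and $\omega=0$; (iv) $(\nabla_\xi\rho)(y,z)=b\,g\big((\nabla_\xi\varphi)y,z\big)$ for all vector fields $y,z$.
   Context: An almost paracontact almost paracomplex Riemannian (apapR) manifold $(\mathcal{M},\varphi,\xi,\eta,g)$ is a smooth $(2n+1)$-dimensional manifold with a $(1,1)$-tensor field $\varphi$, a vector field $\xi$, a 1-form $\eta$ and a Riemannian metric $g$ such that $\varphi\xi=0$, $\varphi^2=I-\eta\otimes\xi$, $\eta\circ\varphi=0$, $\eta(\xi)=1$, $\operatorname{tr}\varphi=0$, $g(\varphi x,\varphi y)=g(x,y)-\eta(x)\eta(y)$. $\nabla$ is the Levi-Civita connection of $g$ and $\rho$ its Ricci tensor. The associated metric is $\tilde g(x,y)=g(x,\varphi y)+\eta(x)\eta(y)$. $F(x,y,z)=g((\nabla_x\varphi)y,z)$ and $\omega(z)=F(\xi,\xi,z)$. The manifold is para-Einstein-like with constants $(a,b,c)$ if $\rho=a\,g+b\,\tilde g+c\,\eta\otimes\eta$. It admits a para-Ricci-like soliton with potential $\xi$ and constants $(\lambda,\mu,\nu)$ if $\rho=-\frac12\mathcal{L}_\xi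 g-\lambda g-\mu\tilde g-\nu\,\eta\otimes\eta$, where $\mathcal L$ is the Lie derivative. *)

theory Defs
  imports "HOL-Analysis.Analysis"
begin

text \<open>Local (chart) model: an open set U of a Euclidean space 'a of dimension 2n+1.
  Vector fields are maps 'a => 'a; tensor fields are given pointwise.\<close>

text \<open>C^k on U, expressed through iterated directional derivatives along constant directions
  (equivalent to the usual C^k for Euclidean domains).\<close>
fun Ck :: "nat \<Rightarrow> 'a::real_normed_vector set \<Rightarrow> ('a \<Rightarrow> 'b::real_normed_vector) \<Rightarrow> bool" where
  "Ck 0 U f = continuous_on U f"
| "Ck (Suc k) U f = ((\<forall>p\<in>U. f differentiable (at p)) \<and>
       (\<forall>v. Ck k U (\<lambda>p. frechet_derivative f (at p) v)))"

definition smooth_on :: "'a::real_normed_vector set \<Rightarrow> ('a \<Rightarrow> 'b::real_normed_vector) \<Rightarrow> bool" where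
  "smooth_on U f \<longleftrightarrow> (\<forall>k. Ck k U f)"

definition vderiv :: "('a::real_normed_vector \<Rightarrow> 'a) \<Rightarrow> ('a \<Rightarrow> 'b::real_normed_vector) \<Rightarrow> 'a \<Rightarrow> 'b" where
  "vderiv X f p = frechet_derivative f (at p) (X p)"

definition lie :: "('a::real_normed_vector \<Rightarrow> 'a) \<Rightarrow> ('a \<Rightarrow> 'a) \<Rightarrow> 'a \<Rightarrow> 'a" where
  "lie X Y p = vderiv X Y p - vderiv Y X p"

definition riem_metric :: "'a::euclidean_space set \<Rightarrow> ('a \<Rightarrow> 'a \<Rightarrow> 'a \<Rightarrow> real) \<Rightarrow> bool" where
  "riem_metric U g \<longleftrightarrow>
     (\<forall>p\<in>U. bilinear (g p) \<and> (\<forall>u v. g p u v = g p v u) \<and> (\<forall>v. v \<noteq> 0 \<longrightarrow> g p v v > 0)) \<and>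
     (\<forall>u v. smooth_on U (\<lambda>p. g p u v))"

definition levi_civita :: "'a::euclidean_space set \<Rightarrow> ('a \<Rightarrow> 'a \<Rightarrow> 'a \<Rightarrow> real)
     \<Rightarrow> (('a \<Rightarrow> 'a) \<Rightarrow> ('a \<Rightarrow> 'a) \<Rightarrow> ('a \<Rightarrow> 'a)) \<Rightarrow> bool" where
  "levi_civita U g nabla \<longleftrightarrow>
     (\<forall>X Y. smooth_on U X \<and> smooth_on U Y \<longrightarrow>
        smooth_on U (nabla X Y) \<and>
        (\<forall>p\<in>U. nabla X Y p - nabla Y X p = lie X Y p) \<and>
        (\<forall>Z. smooth_on U Z \<longrightarrow> (\<forall>p\<in>U.
            vderiv X (\<lambda>q. g q (Y q) (Z q)) p = g p (nabla X Y p) (Z p) + g p (Y p) (nabla X Z p))))"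

definition curv :: "(('a::real_normed_vector \<Rightarrow> 'a) \<Rightarrow> ('a \<Rightarrow> 'a) \<Rightarrow> ('a \<Rightarrow> 'a))
     \<Rightarrow> ('a \<Rightarrow> 'a) \<Rightarrow> ('a \<Rightarrow> 'a) \<Rightarrow> ('a \<Rightarrow> 'a) \<Rightarrow> 'a \<Rightarrow> 'a" where
  "curv nabla X Y Z p = nabla X (nabla Y Z) p - nabla Y (nabla X Z) p - nabla (lie X Y) Z p"

definition ricci :: "(('a::euclidean_space \<Rightarrow> 'a) \<Rightarrow> ('a \<Rightarrow> 'a) \<Rightarrow> ('a \<Rightarrow> 'a))
     \<Rightarrow> ('a \<Rightarrow> 'a) \<Rightarrow> ('a \<Rightarrow> 'a) \<Rightarrow> 'a \<Rightarrow> real" where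
  "ricci nabla Y Z p = (\<Sum>i\<in>Basis. inner (curv nabla (\<lambda>_. i) Y Z p) i)"

definition apapR :: "'a::euclidean_space set \<Rightarrow> ('a \<Rightarrow> 'a \<Rightarrow> 'a) \<Rightarrow> ('a \<Rightarrow> 'a)
     \<Rightarrow> ('a \<Rightarrow> 'a \<Rightarrow> real) \<Rightarrow> ('a \<Rightarrow> 'a \<Rightarrow> 'a \<Rightarrow> real) \<Rightarrow> bool" where
  "apapR U phi xi eta g \<longleftrightarrow>
     open U \<and> U \<noteq> {} \<and> riem_metric U g \<and> smooth_on U xi \<and>
     (\<forall>v. smooth_on U (\<lambda>p. phi p v)) \<and> (\<forall>v. smooth_on U (\<lambda>p. eta p v)) \<and>
     (\<forall>p\<in>U. linear (phi p) \<and> linear (eta p) \<and>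
        phi p (xi p) = 0 \<and>
        (\<forall>v. phi p (phi p v) = v - eta p v *\<^sub>R xi p) \<and>
        (\<forall>v. eta p (phi p v) = 0) \<and>
        eta p (xi p) = 1 \<and>
        (\<Sum>i\<in>Basis. inner (phi p i) i) = 0 \<and>
        (\<forall>u v. g p (phi p u) (phi p v) = g p u v - eta p u * eta p v))"

definition gtilde :: "('a \<Rightarrow> 'a \<Rightarrow> 'a) \<Rightarrow> ('a \<Rightarrow> 'a \<Rightarrow> real) \<Rightarrow> ('a \<Rightarrow> 'a \<Rightarrow> 'a \<Rightarrow> real)
     \<Rightarrow> 'a \<Rightarrow> 'a \<Rightarrow> 'a \<Rightarrow> real" where
  "gtilde phi eta g p u v = g p u (phi p v) + eta p u * eta p v"

definition nabla_phi :: "(('a \<Rightarrow> 'a) \<Rightarrow> ('a \<Rightarrow> 'a) \<Rightarrow> ('a \<Rightarrow> 'a)) \<Rightarrow> ('a \<Rightarrow> 'a \<Rightarrow> 'a::real_vector)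
     \<Rightarrow> ('a \<Rightarrow> 'a) \<Rightarrow> ('a \<Rightarrow> 'a) \<Rightarrow> 'a \<Rightarrow> 'a" where
  "nabla_phi nabla phi X Y p = nabla X (\<lambda>q. phi q (Y q)) p - phi p (nabla X Y p)"

definition nabla_eta :: "(('a \<Rightarrow> 'a) \<Rightarrow> ('a \<Rightarrow> 'a) \<Rightarrow> ('a \<Rightarrow> 'a)) \<Rightarrow> ('a \<Rightarrow> 'a \<Rightarrow> real)
     \<Rightarrow> ('a::real_normed_vector \<Rightarrow> 'a) \<Rightarrow> ('a \<Rightarrow> 'a) \<Rightarrow> 'a \<Rightarrow> real" where
  "nabla_eta nabla eta X Y p = vderiv X (\<lambda>q. eta q (Y q)) p - eta p (nabla X Y p)"

definition Ften :: "(('a \<Rightarrow> 'a) \<Rightarrow> ('a \<Rightarrow> 'a) \<Rightarrow> ('a \<Rightarrow> 'a)) \<Rightarrow> ('a \<Rightarrow> 'a \<Rightarrow> 'a::real_vector)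
     \<Rightarrow> ('a \<Rightarrow> 'a \<Rightarrow> 'a \<Rightarrow> real) \<Rightarrow> ('a \<Rightarrow> 'a) \<Rightarrow> ('a \<Rightarrow> 'a) \<Rightarrow> ('a \<Rightarrow> 'a) \<Rightarrow> 'a \<Rightarrow> real" where
  "Ften nabla phi g X Y Z p = g p (nabla_phi nabla phi X Y p) (Z p)"

definition omega :: "(('a \<Rightarrow> 'a) \<Rightarrow> ('a \<Rightarrow> 'a) \<Rightarrow> ('a \<Rightarrow> 'a)) \<Rightarrow> ('a \<Rightarrow> 'a \<Rightarrow> 'a::real_vector)
     \<Rightarrow> ('a \<Rightarrow> 'a) \<Rightarrow> ('a \<Rightarrow> 'a \<Rightarrow> 'a \<Rightarrow> real) \<Rightarrow> ('a \<Rightarrow> 'a) \<Rightarrow> 'a \<Rightarrow> real" where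
  "omega nabla phi xi g Z p = Ften nabla phi g xi xi Z p"

definition nabla_ricci :: "(('a::euclidean_space \<Rightarrow> 'a) \<Rightarrow> ('a \<Rightarrow> 'a) \<Rightarrow> ('a \<Rightarrow> 'a))
     \<Rightarrow> ('a \<Rightarrow> 'a) \<Rightarrow> ('a \<Rightarrow> 'a) \<Rightarrow> ('a \<Rightarrow> 'a) \<Rightarrow> 'a \<Rightarrow> real" where
  "nabla_ricci nabla X Y Z p =
     vderiv X (ricci nabla Y Z) p - ricci nabla (nabla X Y) Z p - ricci nabla Y (nabla X Z) p"

definition lie_g :: "('a \<Rightarrow> 'a \<Rightarrow> 'a \<Rightarrow> real) \<Rightarrow> ('a::real_normed_vector \<Rightarrow> 'a)
     \<Rightarrow> ('a \<Rightarrow> 'a) \<Rightarrow> ('a \<Rightarrow> 'a) \<Rightarrow> 'a \<Rightarrow> real" where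
  "lie_g g X Y Z p = vderiv X (\<lambda>q. g q (Y q) (Z q)) p - g p (lie X Y p) (Z p) - g p (Y p) (lie X Z p)"

definition para_einstein_like where
  "para_einstein_like U phi xi eta g nabla (a::real) b c \<longleftrightarrow>
     (\<forall>Y Z. smooth_on U Y \<and> smooth_on U Z \<longrightarrow> (\<forall>p\<in>U.
        ricci nabla Y Z p = a * g p (Y p) (Z p) + b * gtilde phi eta g p (Y p) (Z p)
                            + c * eta p (Y p) * eta p (Z p)))"

definition para_ricci_like_soliton where
  "para_ricci_like_soliton U phi xi eta g nabla (lam::real) mu nu \<longleftrightarrow>
     (\<forall>Y Z. smooth_on U Y \<and> smooth_on U Z \<longrightarrow> (\<forall>p\<in>U.
        ricci nabla Y Z p = - (1/2) * lie_g g xi Y Z p - lam * g p (Y p) (Z p)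
                            - mu * gtilde phi eta g p (Y p) (Z p) - nu * eta p (Y p) * eta p (Z p)))"

end

theory Submission
  imports Defs
begin

(* Comparing the two expressions for rho(xi, z) gives
   (L_xi g)(xi, z) = -2 (a + b + c + lambda + mu + nu) eta(z).  As xi has unit length,
   g(xi, nabla_z xi) = 0, so (L_xi g)(xi, z) = g(nabla_xi xi, z); taking z = xi yields (i), and
   then nabla_xi xi = 0 by nondegeneracy of g.  Items (iii) follow from phi xi = 0 and
   (nabla_x eta)(y) = g(nabla_x xi, y).  For (iv), differentiating rho = a g + b gtilde + c eta (x) eta
   by the Leibniz rule leaves only the terms with nabla phi and nabla eta, and nabla_xi eta = 0. *)

lemma frechet_derivative_cong_open:
  assumes "open U" "p \<in> U" "\<And>q. q \<in> U \<Longrightarrow> f q = h q"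
  shows "frechet_derivative f (at p) = frechet_derivative h (at p)"
proof -
  have "(f has_derivative D) (at p) \<longleftrightarrow> (h has_derivative D) (at p)" for D
    using assms by (metis has_derivative_transform_within_open)
  then show ?thesis unfolding frechet_derivative_def by simp
qed

lemma Ck_cong_open:
  assumes "open U" "Ck k U f" "\<And>q. q \<in> U \<Longrightarrow> f q = h q"
  shows "Ck k U h"
  using assms(2,3)
proof (induction k arbitrary: f h)
  case 0
  then show ?case by (metis Ck.simps(1) continuous_on_cong)
next
  case (Suc k)
  have "h differentiable (at p)" if "p \<in> U" for p
    using Suc.prems that assms(1)
    by (metis Ck.simps(2) differentiable_def has_derivative_transform_within_open)
  moreover have "Ck k U (\<lambda>p. frechet_derivative h (at p) v)" for v
  proof (rule Suc.IH)
    show "Ck k U (\<lambda>p. frechet_derivative f (at p) v)"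
      using Suc.prems(1) by simp
    show "frechet_derivative f (at q) v = frechet_derivative h (at q) v" if "q \<in> U" for q
      using frechet_derivative_cong_open[OF assms(1) that Suc.prems(2)] by simp
  qed
  ultimately show ?case by simp
qed

lemma Ck_const: "Ck k U (\<lambda>_. c)"
  by (induction k arbitrary: c) simp_all

lemma Ck_SucD: "Ck (Suc k) U f \<Longrightarrow> Ck k U f"
proof (induction k arbitrary: f)
  case 0
  then show ?case
    by (simp add: continuous_at_imp_continuous_on differentiable_imp_continuous_within)
next
  case (Suc k)
  then show ?case by (metis Ck.simps(2))
qed

lemma Ck_add:
  assumes "open U"
  shows "Ck k U f \<Longrightarrow> Ck k U h \<Longrightarrow> Ck k U (\<lambda>p. f p + h p)"
proof (induction k arbitrary: f h)
  case 0
  then show ?case by (simp add: continuous_on_add)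
next
  case (Suc k)
  let ?D = "\<lambda>f p. frechet_derivative f (at p)"
  have deriv: "((\<lambda>p. f p + h p) has_derivative (\<lambda>v. ?D f q v + ?D h q v)) (at q)"
    if "q \<in> U" for q
    using Suc.prems that by (intro has_derivative_add) (auto simp: frechet_derivative_works[symmetric])
  have Ck_deriv: "Ck k U (\<lambda>p. ?D f p v + ?D h p v)" for v
    using Suc by simp
  have "Ck k U (\<lambda>p. ?D (\<lambda>p. f p + h p) p v)" for v
    by (rule Ck_cong_open[OF assms Ck_deriv]) (simp add: frechet_derivative_at[OF deriv, symmetric])
  then show ?case using deriv by (auto intro: differentiableI)
qed

lemma Ck_bounded_bilinear:
  assumes "open U" "bounded_bilinear B"
  shows "Ck k U f \<Longrightarrow> Ck k U h \<Longrightarrow> Ck k U (\<lambda>p. B (f p) (h p))"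
proof (induction k arbitrary: f h)
  case 0
  then show ?case using bounded_bilinear.continuous_on[OF assms(2)] by simp
next
  case (Suc k)
  let ?D = "\<lambda>f p. frechet_derivative f (at p)"
  have deriv: "((\<lambda>p. B (f p) (h p)) has_derivative
      (\<lambda>v. B (f q) (?D h q v) + B (?D f q v) (h q))) (at q)" if "q \<in> U" for q
    using Suc.prems that
    by (intro bounded_bilinear.FDERIV[OF assms(2)]) (auto simp: frechet_derivative_works[symmetric])
  have Ck_deriv: "Ck k U (\<lambda>p. B (f p) (?D h p v) + B (?D f p v) (h p))" for v
    using Suc.prems by (intro Ck_add[OF assms(1)] Suc.IH) (auto intro: Ck_SucD)
  have "Ck k U (\<lambda>p. ?D (\<lambda>p. B (f p) (h p)) p v)" for v
    by (rule Ck_cong_open[OF assms(1) Ck_deriv]) (simp add: frechet_derivative_at[OF deriv, symmetric])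
  then show ?case using deriv by (auto intro: differentiableI)
qed

lemma Ck_sum:
  assumes "open U" "finite S" "\<And>i. i \<in> S \<Longrightarrow> Ck k U (f i)"
  shows "Ck k U (\<lambda>p. \<Sum>i\<in>S. f i p)"
  using assms(2,3) by (induction S rule: finite_induct) (simp_all add: Ck_const Ck_add[OF assms(1)])

lemma smooth_on_const: "smooth_on U (\<lambda>_. c)"
  by (simp add: smooth_on_def Ck_const)

lemma smooth_on_cong_open:
  "open U \<Longrightarrow> smooth_on U f \<Longrightarrow> (\<And>q. q \<in> U \<Longrightarrow> f q = h q) \<Longrightarrow> smooth_on U h"
  unfolding smooth_on_def by (metis Ck_cong_open)

lemma smooth_on_bounded_bilinear:
  "open U \<Longrightarrow> bounded_bilinear B \<Longrightarrow> smooth_on U f \<Longrightarrow> smooth_on U h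
    \<Longrightarrow> smooth_on U (\<lambda>p. B (f p) (h p))"
  by (simp add: smooth_on_def Ck_bounded_bilinear)

lemma smooth_on_sum:
  "open U \<Longrightarrow> finite S \<Longrightarrow> (\<And>i. i \<in> S \<Longrightarrow> smooth_on U (f i))
    \<Longrightarrow> smooth_on U (\<lambda>p. \<Sum>i\<in>S. f i p)"
  by (simp add: smooth_on_def Ck_sum)

lemma smooth_on_differentiable: "smooth_on U f \<Longrightarrow> p \<in> U \<Longrightarrow> f differentiable (at p)"
  unfolding smooth_on_def by (metis Ck.simps(2))

lemma smooth_on_linear_apply:
  fixes A :: "'a::euclidean_space \<Rightarrow> 'a \<Rightarrow> 'b::real_normed_vector"
  assumes U: "open U" and A: "\<And>v. smooth_on U (\<lambda>p. A p v)" "\<And>p. p \<in> U \<Longrightarrow> linear (A p)"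
    and Y: "smooth_on U Y"
  shows "smooth_on U (\<lambda>p. A p (Y p))"
proof (rule smooth_on_cong_open[OF U])
  show "smooth_on U (\<lambda>p. \<Sum>i\<in>Basis. (Y p \<bullet> i) *\<^sub>R A p i)"
  proof (rule smooth_on_sum[OF U finite_Basis])
    fix i :: 'a
    have "smooth_on U (\<lambda>p. Y p \<bullet> i)"
      by (rule smooth_on_bounded_bilinear[OF U bounded_bilinear_inner Y smooth_on_const])
    then show "smooth_on U (\<lambda>p. (Y p \<bullet> i) *\<^sub>R A p i)"
      by (rule smooth_on_bounded_bilinear[OF U bounded_bilinear_scaleR _ A(1)])
  qed
  fix q assume "q \<in> U"
  then have "A q (\<Sum>i\<in>Basis. (Y q \<bullet> i) *\<^sub>R i) = (\<Sum>i\<in>Basis. (Y q \<bullet> i) *\<^sub>R A q i)"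
    using A(2) by (simp add: linear_sum linear_scale)
  then show "(\<Sum>i\<in>Basis. (Y q \<bullet> i) *\<^sub>R A q i) = A q (Y q)"
    by (simp add: euclidean_representation)
qed

lemma vderiv_cong_open:
  "open U \<Longrightarrow> p \<in> U \<Longrightarrow> (\<And>q. q \<in> U \<Longrightarrow> f q = h q) \<Longrightarrow> vderiv X f p = vderiv X h p"
  unfolding vderiv_def using frechet_derivative_cong_open[of U p f h] by simp

lemma vderiv_const [simp]: "vderiv X (\<lambda>_. c) p = 0"
  by (simp add: vderiv_def)

lemma vderiv_const_on:
  "open U \<Longrightarrow> p \<in> U \<Longrightarrow> (\<And>q. q \<in> U \<Longrightarrow> f q = c) \<Longrightarrow> vderiv X f p = 0"
  using vderiv_cong_open[of U p f "\<lambda>_. c" X] by simp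

lemma vderiv_add:
  assumes "f differentiable (at p)" "h differentiable (at p)"
  shows "vderiv X (\<lambda>q. f q + h q) p = vderiv X f p + vderiv X h p"
  unfolding vderiv_def
    frechet_derivative_at[OF has_derivative_add[OF assms[unfolded frechet_derivative_works]], symmetric]
  by simp

lemma vderiv_mult:
  fixes f h :: "'a::real_normed_vector \<Rightarrow> real"
  assumes "f differentiable (at p)" "h differentiable (at p)"
  shows "vderiv X (\<lambda>q. f q * h q) p = f p * vderiv X h p + vderiv X f p * h p"
  unfolding vderiv_def
    frechet_derivative_at[OF has_derivative_mult[OF assms[unfolded frechet_derivative_works]], symmetric]
  by simp

locale apapR_manifold =
  fixes U :: "'a::euclidean_space set" and phi :: "'a \<Rightarrow> 'a \<Rightarrow> 'a" and xi :: "'a \<Rightarrow> 'a"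
    and eta :: "'a \<Rightarrow> 'a \<Rightarrow> real" and g :: "'a \<Rightarrow> 'a \<Rightarrow> 'a \<Rightarrow> real"
  assumes apapR: "apapR U phi xi eta g"
begin

lemma open_U: "open U"
  and U_nonempty: "U \<noteq> {}"
  and smooth_xi: "smooth_on U xi"
  and smooth_phi: "smooth_on U (\<lambda>p. phi p v)"
  and smooth_eta: "smooth_on U (\<lambda>p. eta p v)"
  and smooth_metric: "smooth_on U (\<lambda>p. g p v w)"
  using apapR by (auto simp: apapR_def riem_metric_def)

context
  fixes p assumes p: "p \<in> U"
begin

lemma linear_phi: "linear (phi p)"
  and linear_eta: "linear (eta p)"
  and phi_xi: "phi p (xi p) = 0"
  and phi_phi: "phi p (phi p v) = v - eta p v *\<^sub>R xi p"
  and eta_phi: "eta p (phi p v) = 0"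
  and eta_xi: "eta p (xi p) = 1"
  and metric_phi_phi: "g p (phi p u) (phi p v) = g p u v - eta p u * eta p v"
  and bilinear_metric: "bilinear (g p)"
  and metric_sym: "g p u v = g p v u"
  and metric_pos: "v \<noteq> 0 \<Longrightarrow> g p v v > 0"
  using apapR p by (auto simp: apapR_def riem_metric_def)

lemma metric_zero_left [simp]: "g p 0 v = 0"
  using bilinear_metric by (simp add: bilinear_lzero)

lemma metric_xi_left: "g p (xi p) v = eta p v"
  using metric_phi_phi[of "xi p" v] by (simp add: phi_xi eta_xi)

lemma metric_phi_sym: "g p (phi p u) v = g p u (phi p v)"
proof -
  have "g p (phi p u) v = g p (phi p u) (phi p (phi p v) + eta p v *\<^sub>R xi p)"
    by (simp add: phi_phi)
  also have "\<dots> = g p (phi p u) (phi p (phi p v)) + eta p v * g p (phi p u) (xi p)"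
    using bilinear_metric by (simp add: bilinear_radd bilinear_rmul)
  also have "\<dots> = g p u (phi p v)"
    by (simp add: metric_phi_phi metric_sym[of "phi p u"] metric_xi_left eta_phi)
  finally show ?thesis .
qed

end

lemma smooth_phi_apply: "smooth_on U Y \<Longrightarrow> smooth_on U (\<lambda>p. phi p (Y p))"
  using smooth_on_linear_apply[OF open_U smooth_phi linear_phi] .

lemma smooth_eta_apply: "smooth_on U Y \<Longrightarrow> smooth_on U (\<lambda>p. eta p (Y p))"
  using smooth_on_linear_apply[OF open_U smooth_eta linear_eta] .

lemma smooth_metric_apply:
  assumes "smooth_on U Y" "smooth_on U Z"
  shows "smooth_on U (\<lambda>p. g p (Y p) (Z p))"
proof -
  have linear_left: "linear (\<lambda>u. g p u w)" and linear_right: "linear (g p u)" if "p \<in> U" for p u w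
    using bilinear_metric[OF that] by (simp_all add: bilinear_def)
  have "smooth_on U (\<lambda>p. g p u (Z p))" for u
    by (rule smooth_on_linear_apply[OF open_U smooth_metric linear_right assms(2)])
  then show ?thesis
    by (rule smooth_on_linear_apply[OF open_U _ linear_left assms(1)])
qed

lemma metric_nondegenerate:
  assumes "p \<in> U" "\<And>Z. smooth_on U Z \<Longrightarrow> g p x (Z p) = 0"
  shows "x = 0"
  using assms(2)[OF smooth_on_const] metric_pos[OF assms(1), of x] by fastforce

definition einstein_like_form :: "real \<Rightarrow> real \<Rightarrow> real \<Rightarrow> 'a \<Rightarrow> 'a \<Rightarrow> 'a \<Rightarrow> real" where
  "einstein_like_form a b c p u v =
     a * g p u v + b * gtilde phi eta g p u v + c * eta p u * eta p v"

lemma einstein_like_form_phi: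
  "p \<in> U \<Longrightarrow> einstein_like_form a b c p u v
     = a * g p u v + b * g p (phi p u) v + (b + c) * (eta p u * eta p v)"
  by (simp add: einstein_like_form_def gtilde_def metric_phi_sym algebra_simps)

lemma einstein_like_form_xi_left:
  "p \<in> U \<Longrightarrow> einstein_like_form a b c p (xi p) v = (a + b + c) * eta p v"
  by (simp add: einstein_like_form_phi metric_xi_left phi_xi eta_xi algebra_simps)

lemma ricci_einstein_like:
  "para_einstein_like U phi xi eta g nabla a b c \<Longrightarrow> smooth_on U Y \<Longrightarrow> smooth_on U Z \<Longrightarrow> p \<in> U
    \<Longrightarrow> ricci nabla Y Z p = einstein_like_form a b c p (Y p) (Z p)"
  by (simp add: para_einstein_like_def einstein_like_form_def)

lemma ricci_soliton:
  "para_ricci_like_soliton U phi xi eta g nabla lam mu nu \<Longrightarrow> smooth_on U Y \<Longrightarrow> smooth_on U Z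
    \<Longrightarrow> p \<in> U \<Longrightarrow> ricci nabla Y Z p
      = - (1/2) * lie_g g xi Y Z p - einstein_like_form lam mu nu p (Y p) (Z p)"
  by (simp add: para_ricci_like_soliton_def einstein_like_form_def)

end

locale apapR_levi_civita = apapR_manifold +
  fixes nabla :: "('a \<Rightarrow> 'a) \<Rightarrow> ('a \<Rightarrow> 'a) \<Rightarrow> ('a \<Rightarrow> 'a)"
  assumes levi_civita: "levi_civita U g nabla"
begin

lemma smooth_nabla: "smooth_on U X \<Longrightarrow> smooth_on U Y \<Longrightarrow> smooth_on U (nabla X Y)"
  and torsion_free: "smooth_on U X \<Longrightarrow> smooth_on U Y \<Longrightarrow> p \<in> U
    \<Longrightarrow> nabla X Y p - nabla Y X p = lie X Y p"
  and metric_compatible: "smooth_on U X \<Longrightarrow> smooth_on U Y \<Longrightarrow> smooth_on U Z \<Longrightarrow> p \<in> U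
    \<Longrightarrow> vderiv X (\<lambda>q. g q (Y q) (Z q)) p = g p (nabla X Y p) (Z p) + g p (Y p) (nabla X Z p)"
  using levi_civita by (auto simp: levi_civita_def)

lemma nabla_eq_0_if_vanishing:
  assumes X: "smooth_on U X" and Y: "smooth_on U Y" and Y0: "\<And>q. q \<in> U \<Longrightarrow> Y q = 0"
    and p: "p \<in> U"
  shows "nabla X Y p = 0"
proof (rule metric_nondegenerate[OF p])
  fix Z :: "'a \<Rightarrow> 'a" assume Z: "smooth_on U Z"
  have "vderiv X (\<lambda>q. g q (Y q) (Z q)) p = 0"
    using p Y0 by (intro vderiv_const_on[OF open_U]) simp_all
  then show "g p (nabla X Y p) (Z p) = 0"
    using metric_compatible[OF X Y Z p] p Y0 by simp
qed

lemma nabla_eta_eq_metric: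
  assumes X: "smooth_on U X" and Y: "smooth_on U Y" and p: "p \<in> U"
  shows "nabla_eta nabla eta X Y p = g p (nabla X xi p) (Y p)"
proof -
  have "vderiv X (\<lambda>q. eta q (Y q)) p = vderiv X (\<lambda>q. g q (xi q) (Y q)) p"
    using p by (intro vderiv_cong_open[OF open_U]) (simp_all add: metric_xi_left)
  also have "\<dots> = g p (nabla X xi p) (Y p) + eta p (nabla X Y p)"
    using metric_compatible[OF X smooth_xi Y p] p by (simp add: metric_xi_left)
  finally show ?thesis by (simp add: nabla_eta_def)
qed

lemma metric_nabla_xi_xi:
  assumes X: "smooth_on U X" and p: "p \<in> U"
  shows "g p (nabla X xi p) (xi p) = 0"
proof -
  have "vderiv X (\<lambda>q. g q (xi q) (xi q)) p = 0"
    using p by (intro vderiv_const_on[OF open_U, where c = 1]) (simp_all add: metric_xi_left eta_xi)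
  then show ?thesis
    using metric_compatible[OF X smooth_xi smooth_xi p] metric_sym[OF p, of "xi p"] by simp
qed

lemma nabla_phi_xi:
  assumes X: "smooth_on U X" and p: "p \<in> U"
  shows "nabla_phi nabla phi X xi p = - phi p (nabla X xi p)"
  using nabla_eq_0_if_vanishing[OF X smooth_phi_apply[OF smooth_xi] phi_xi p]
  by (simp add: nabla_phi_def)

lemma lie_g_xi_xi:
  assumes Z: "smooth_on U Z" and p: "p \<in> U"
  shows "lie_g g xi xi Z p = g p (nabla xi xi p) (Z p)"
proof -
  have "lie xi Z p = nabla xi Z p - nabla Z xi p"
    using torsion_free[OF smooth_xi Z p] by simp
  then have "g p (xi p) (lie xi Z p) = g p (xi p) (nabla xi Z p)"
    using bilinear_metric[OF p] metric_nabla_xi_xi[OF Z p] metric_sym[OF p, of "xi p"]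
    by (simp add: bilinear_lsub)
  then show ?thesis
    using metric_compatible[OF smooth_xi smooth_xi Z p] p by (simp add: lie_g_def lie_def)
qed

lemma vderiv_einstein_like_form:
  assumes X: "smooth_on U X" and Y: "smooth_on U Y" and Z: "smooth_on U Z" and p: "p \<in> U"
  shows "vderiv X (\<lambda>q. einstein_like_form a b c q (Y q) (Z q)) p
    = einstein_like_form a b c p (nabla X Y p) (Z p) + einstein_like_form a b c p (Y p) (nabla X Z p)
      + b * g p (nabla_phi nabla phi X Y p) (Z p)
      + (b + c) * (nabla_eta nabla eta X Y p * eta p (Z p) + eta p (Y p) * nabla_eta nabla eta X Z p)"
proof -
  define gYZ where "gYZ = (\<lambda>q. g q (Y q) (Z q))"
  define gphiYZ where "gphiYZ = (\<lambda>q. g q (phi q (Y q)) (Z q))"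
  define etaY where "etaY = (\<lambda>q. eta q (Y q))"
  define etaZ where "etaZ = (\<lambda>q. eta q (Z q))"
  have "gYZ differentiable (at p)" "gphiYZ differentiable (at p)"
    "etaY differentiable (at p)" "etaZ differentiable (at p)"
    unfolding gYZ_def gphiYZ_def etaY_def etaZ_def
    by (intro smooth_on_differentiable[OF _ p] smooth_metric_apply smooth_eta_apply
        smooth_phi_apply Y Z)+
  then have "vderiv X (\<lambda>q. a * gYZ q + b * gphiYZ q + (b + c) * (etaY q * etaZ q)) p
      = a * vderiv X gYZ p + b * vderiv X gphiYZ p
        + (b + c) * (etaY p * vderiv X etaZ p + vderiv X etaY p * etaZ p)"
    by (simp add: vderiv_add vderiv_mult differentiable_add differentiable_mult)
  moreover have "vderiv X (\<lambda>q. einstein_like_form a b c q (Y q) (Z q)) p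
      = vderiv X (\<lambda>q. a * gYZ q + b * gphiYZ q + (b + c) * (etaY q * etaZ q)) p"
    using p by (intro vderiv_cong_open[OF open_U])
        (simp_all add: einstein_like_form_phi gYZ_def gphiYZ_def etaY_def etaZ_def)
  moreover have "g p (nabla X (\<lambda>q. phi q (Y q)) p) (Z p)
      = g p (nabla_phi nabla phi X Y p) (Z p) + g p (phi p (nabla X Y p)) (Z p)"
    using bilinear_metric[OF p] by (simp add: nabla_phi_def bilinear_lsub)
  ultimately show ?thesis
    using metric_compatible[OF X Y Z p] metric_compatible[OF X smooth_phi_apply[OF Y] Z p] p
    by (simp add: gYZ_def gphiYZ_def etaY_def etaZ_def nabla_eta_def einstein_like_form_phi
        algebra_simps)
qed

lemma nabla_ricci_einstein_like:
  assumes "para_einstein_like U phi xi eta g nabla a b c"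
    and X: "smooth_on U X" and Y: "smooth_on U Y" and Z: "smooth_on U Z" and p: "p \<in> U"
  shows "nabla_ricci nabla X Y Z p = b * g p (nabla_phi nabla phi X Y p) (Z p)
    + (b + c) * (nabla_eta nabla eta X Y p * eta p (Z p) + eta p (Y p) * nabla_eta nabla eta X Z p)"
proof -
  note ricci = ricci_einstein_like[OF assms(1)]
  have "vderiv X (ricci nabla Y Z) p = vderiv X (\<lambda>q. einstein_like_form a b c q (Y q) (Z q)) p"
    using p by (intro vderiv_cong_open[OF open_U]) (simp_all add: ricci Y Z)
  then show ?thesis
    using vderiv_einstein_like_form[OF X Y Z p]
    by (simp add: nabla_ricci_def ricci smooth_nabla X Y Z p)
qed

lemma lie_g_xi_xi_soliton:
  assumes "para_einstein_like U phi xi eta g nabla a b c"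
    and "para_ricci_like_soliton U phi xi eta g nabla lam mu nu"
    and Z: "smooth_on U Z" and p: "p \<in> U"
  shows "lie_g g xi xi Z p = - 2 * (a + b + c + lam + mu + nu) * eta p (Z p)"
  using ricci_einstein_like[OF assms(1) smooth_xi Z p] ricci_soliton[OF assms(2) smooth_xi Z p] p
  by (simp add: einstein_like_form_xi_left algebra_simps)

end

theorem mainTheorem9:
  fixes U :: "'a::euclidean_space set" and n :: nat
    and phi :: "'a \<Rightarrow> 'a \<Rightarrow> 'a" and xi :: "'a \<Rightarrow> 'a" and eta :: "'a \<Rightarrow> 'a \<Rightarrow> real"
    and g :: "'a \<Rightarrow> 'a \<Rightarrow> 'a \<Rightarrow> real"
    and nabla :: "('a \<Rightarrow> 'a) \<Rightarrow> ('a \<Rightarrow> 'a) \<Rightarrow> ('a \<Rightarrow> 'a)"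
    and a b c lam mu nu :: real
  assumes "DIM('a) = 2 * n + 1"
    and "apapR U phi xi eta g"
    and "levi_civita U g nabla"
    and "para_einstein_like U phi xi eta g nabla a b c"
    and "para_ricci_like_soliton U phi xi eta g nabla lam mu nu"
  shows "a + b + c = - lam - mu - nu
    \<and> (\<forall>p\<in>U. nabla xi xi p = 0)
    \<and> (\<forall>p\<in>U. nabla_phi nabla phi xi xi p = 0)
    \<and> (\<forall>Y. smooth_on U Y \<longrightarrow> (\<forall>p\<in>U. nabla_eta nabla eta xi Y p = 0))
    \<and> (\<forall>Z. smooth_on U Z \<longrightarrow> (\<forall>p\<in>U. omega nabla phi xi g Z p = 0))
    \<and> (\<forall>Y Z. smooth_on U Y \<and> smooth_on U Z \<longrightarrow>
           (\<forall>p\<in>U. nabla_ricci nabla xi Y Z p = b * g p (nabla_phi nabla phi xi Y p) (Z p)))"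
proof -
  interpret apapR_levi_civita U phi xi eta g nabla
    using assms(2,3) by (simp add: apapR_levi_civita_def apapR_levi_civita_axioms_def
        apapR_manifold_def)
  note lie_g_xi_xi_eq = lie_g_xi_xi_soliton[OF assms(4,5)]
  obtain p0 where p0: "p0 \<in> U"
    using U_nonempty by blast
  have constants: "a + b + c + lam + mu + nu = 0"
    using lie_g_xi_xi_eq[OF smooth_xi p0] lie_g_xi_xi[OF smooth_xi p0]
      metric_nabla_xi_xi[OF smooth_xi p0] eta_xi[OF p0] by simp
  have geodesic: "nabla xi xi p = 0" if p: "p \<in> U" for p
    using metric_nondegenerate[OF p] lie_g_xi_xi[OF _ p] lie_g_xi_xi_eq[OF _ p] constants by simp
  have nabla_phi_xi_xi: "nabla_phi nabla phi xi xi p = 0" if p: "p \<in> U" for p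
    using nabla_phi_xi[OF smooth_xi p] geodesic[OF p] linear_0[OF linear_phi[OF p]] by simp
  have nabla_xi_eta: "nabla_eta nabla eta xi Y p = 0" if "smooth_on U Y" "p \<in> U" for Y p
    using nabla_eta_eq_metric[OF smooth_xi that] geodesic that by simp
  show ?thesis
    using constants geodesic nabla_phi_xi_xi nabla_xi_eta
      nabla_ricci_einstein_like[OF assms(4) smooth_xi]
    by (auto simp: omega_def Ften_def algebra_simps)
qed

end
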